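(* Consider the three-door Monty Hall game described in the context. For every pure strategy $A$ of Conie there exists a door $u\in\{1,2,3\}$ (depending on $A$) such that $A$ loses against every pure strategy $(\theta,d)$ of Monte with $\theta=u$ (that is, whatever door $d$ Monte offers in case of a match). Consequently the always-switching strategy $u\,\mathrm{s}\,\mathrm{s}$ weakly dominates $A$: for every pure strategy $S$ of Monte, if $A$ wins against $S$ then $u\,\mathrm{s}\,\mathrm{s}$ wins against $S$.
   Context: Doors are numbered $1,2,3$. A pure strategy of Monte is a pair $(\theta,d)$ with $\theta\in\{1,2,3\}$ (the door hiding the prize) and $d\in\{1,2,3\}\setminus\{\theta\}$; there are six of them: $12,13,21,23,31,32$. A pure strategy of Conie is a triple $x\,a\,b$ with $x\in\{1,2,3\}$ (her initial choice) and $a,b\in\{\mathrm{h},\mathrm{s}\}$ (hold or switch); there are twelve of them. A play under the profile $((\theta,d),x\,a\,b)$ proceeds as follows: Monte offers door $y$, where $y=\theta$ if $x\neq\theta$ and $y=d$ if $x=\theta$ (a match). Conie's action is $a$ if $y$ is the smaller of the two doors in $\{1,2,3\}\setminus\{x\}$ and $b$ if it is the larger. Her final choice is $z=x$ if the action is $\mathrm{h}$ and $z=y$ if it is $\mathrm{s}$. Conie wins (payoff $1$) iff $z=\theta$, otherwise she gets payoff $0$. Strategies $x\,\mathrm{s}\,\mathrm{s}$ are called always-switching. *)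

theory Defs
  imports Main
begin

type_synonym door = nat

definition doors :: "door set" where "doors = {1,2,3}"

datatype action = Hold | Switch

type_synonym monte_strat = "door \<times> door"
type_synonym conie_strat = "door \<times> action \<times> action"

definition is_monte :: "monte_strat \<Rightarrow> bool" where
  "is_monte S = (case S of (\<theta>, d) \<Rightarrow> \<theta> \<in> doors \<and> d \<in> doors \<and> d \<noteq> \<theta>)"

definition is_conie :: "conie_strat \<Rightarrow> bool" where
  "is_conie A = (case A of (x, a, b) \<Rightarrow> x \<in> doors)"

definition offered :: "monte_strat \<Rightarrow> conie_strat \<Rightarrow> door" where
  "offered S A = (case S of (\<theta>, d) \<Rightarrow> case A of (x, a, b) \<Rightarrow> if x \<noteq> \<theta> then \<theta> else d)"

definition conie_action :: "monte_strat \<Rightarrow> conie_strat \<Rightarrow> action" where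
  "conie_action S A = (case A of (x, a, b) \<Rightarrow>
     if offered S A = Min (doors - {x}) then a else b)"

definition final_choice :: "monte_strat \<Rightarrow> conie_strat \<Rightarrow> door" where
  "final_choice S A = (case A of (x, a, b) \<Rightarrow>
     if conie_action S A = Hold then x else offered S A)"

definition wins :: "monte_strat \<Rightarrow> conie_strat \<Rightarrow> bool" where
  "wins S A = (final_choice S A = fst S)"

end

theory Submission
  imports Defs
begin

text \<open>Against a prize behind \<open>\<theta>\<close>, Conie wins by switching when her first pick missed and by
holding when it matched. So a strategy that holds on some offered door loses whenever the prize
is behind that door (it is offered and not taken), and a strategy that switches on both offers
loses whenever the prize is behind its first pick. The always-switching strategy \<open>u s s\<close> wins
exactly when the prize is not behind \<open>u\<close>; since \<open>A\<close> never wins then, \<open>u s s\<close> wins whenever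
\<open>A\<close> does.\<close>

lemma doors_remove_eq_pair:
  assumes "x \<in> doors"
  obtains p q where "p < q" "doors - {x} = {p, q}"
proof -
  have "x = 1 \<or> x = 2 \<or> x = 3" using assms by (auto simp: doors_def)
  then show thesis
    by (elim disjE) (rule that; auto simp: doors_def)+
qed

lemma wins_iff_conie_action:
  assumes "d \<noteq> \<theta>"
  shows "wins (\<theta>, d) (x, a, b) \<longleftrightarrow> conie_action (\<theta>, d) (x, a, b) = (if x = \<theta> then Hold else Switch)"
  using assms
  by (cases "conie_action (\<theta>, d) (x, a, b)") (auto simp: wins_def final_choice_def offered_def)

lemma wins_always_switch_iff:
  assumes "d \<noteq> \<theta>"
  shows "wins (\<theta>, d) (u, Switch, Switch) \<longleftrightarrow> u \<noteq> \<theta>"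
  using assms by (simp add: wins_iff_conie_action conie_action_def)

lemma exists_losing_door:
  assumes "is_conie A"
  shows "\<exists>u \<in> doors. \<forall>d. is_monte (u, d) \<longrightarrow> \<not> wins (u, d) A"
proof -
  obtain x a b where A: "A = (x, a, b)" by (cases A) auto
  from assms obtain p q where "p < q" and others: "doors - {x} = {p, q}"
    unfolding A is_conie_def by (auto elim: doors_remove_eq_pair)
  then have p_min: "Min (doors - {x}) = p" by simp
  have "p \<in> doors" "q \<in> doors" "p \<noteq> x" "q \<noteq> x" using others by auto
  consider "a = Hold" | "a = Switch" "b = Hold" | "a = Switch" "b = Switch"
    by (cases a; cases b) auto
  then show ?thesis
  proof cases
    case 1
    have "conie_action (p, d) A = Hold" for d
      using \<open>p \<noteq> x\<close> 1 by (simp add: A conie_action_def offered_def p_min)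
    with \<open>p \<in> doors\<close> \<open>p \<noteq> x\<close> show ?thesis
      by (intro bexI[of _ p]) (auto simp: A is_monte_def wins_iff_conie_action)
  next
    case 2
    have "conie_action (q, d) A = Hold" for d
      using \<open>q \<noteq> x\<close> \<open>p < q\<close> 2 by (simp add: A conie_action_def offered_def p_min)
    with \<open>q \<in> doors\<close> \<open>q \<noteq> x\<close> show ?thesis
      by (intro bexI[of _ q]) (auto simp: A is_monte_def wins_iff_conie_action)
  next
    case 3
    have "conie_action S A = Switch" for S
      using 3 by (simp add: A conie_action_def)
    with assms show ?thesis
      by (intro bexI[of _ x]) (auto simp: A is_conie_def is_monte_def wins_iff_conie_action)
  qed
qed

theorem mainTheorem1:
  assumes "is_conie A"
  shows "\<exists>u \<in> doors.
           (\<forall>d. is_monte (u, d) \<longrightarrow> \<not> wins (u, d) A) \<and>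
           (\<forall>S. is_monte S \<longrightarrow> wins S A \<longrightarrow> wins S (u, Switch, Switch))"
proof -
  obtain u where "u \<in> doors" and loses: "\<forall>d. is_monte (u, d) \<longrightarrow> \<not> wins (u, d) A"
    using exists_losing_door[OF assms] by blast
  have "wins S (u, Switch, Switch)" if "is_monte S" "wins S A" for S
  proof -
    obtain \<theta> d where S: "S = (\<theta>, d)" by (cases S)
    with that loses have "\<theta> \<noteq> u" by auto
    with that show ?thesis by (simp add: S is_monte_def wins_always_switch_iff)
  qed
  with \<open>u \<in> doors\<close> loses show ?thesis by blast
qed

end
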